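(* Let $X$ be an FK-space containing $\phi$. Then $\phi\subseteq D_p^qS\subseteq D_p^qW\subseteq D_p^qF\subseteq D_p^qB\subseteq X$ and $\phi\subseteq D_p^qS\subseteq D_p^qW\subseteq\overline{\phi}$, where all these subspaces are computed in $X$ and $\overline{\phi}$ is the closure of $\phi$ in $X$.
   Context: An FK-space is a vector subspace of the space $w$ of all complex sequences with a complete metrizable locally convex topology in which coordinate functionals are continuous; $X'$ is its continuous dual. $\delta^j$ has $1$ in position $j$, $0$ elsewhere; $\phi=\operatorname{span}\{\delta^j\}$. $p(n)<q(n)$ are nonnegative integer sequences with $q(n)\to\infty$. For $x\in w$, $x^{(k)}=\sum_{j=1}^kx_j\delta^j$ and $T_n(x)=\frac{1}{q(n)-p(n)}\sum_{k=p(n)+1}^{q(n)}x^{(k)}$, so $f(T_n(x))=\frac{1}{q(n)-p(n)}\sum_{k=p(n)+1}^{q(n)}\sum_{j=1}^kx_jf(\delta^j)$. Subspaces: $D_p^qS=\{x\in X: T_n(x)\to x \text{ in } X\}$; $D_p^qW=\{x\in X: f(T_n(x))\to f(x)\ \forall f\in X'\}$; $D_p^qF^+=\{x\in w: \lim_n f(T_n(x))\text{ exists }\forall f\in X'\}$; $D_p^qB^+=\{x\in w:\sup_n|f(T_n(x))|<\infty\ \forall f\in X'\}$; $D_p^qF=D_p^qF^+\cap X$; $D_p^qB=D_p^qB^+\cap X$. *)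

theory Defs
  imports "HOL-Analysis.Analysis"
begin

text \<open>Sequences are modelled as functions nat => complex, indexed from 0
 (position j of the paper corresponds to index j-1 here).\<close>

type_synonym seq = "nat \<Rightarrow> complex"

definition seq_add :: "seq \<Rightarrow> seq \<Rightarrow> seq" where
  "seq_add x y = (\<lambda>j. x j + y j)"

definition seq_smult :: "complex \<Rightarrow> seq \<Rightarrow> seq" where
  "seq_smult c x = (\<lambda>j. c * x j)"

definition seq_subspace :: "seq set \<Rightarrow> bool" where
  "seq_subspace X \<longleftrightarrow> (\<lambda>j. 0) \<in> X \<and>
     (\<forall>x\<in>X. \<forall>y\<in>X. seq_add x y \<in> X) \<and> (\<forall>c. \<forall>x\<in>X. seq_smult c x \<in> X)"

definition FK_space :: "seq set \<Rightarrow> seq topology \<Rightarrow> bool" where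
  "FK_space X T \<longleftrightarrow>
     seq_subspace X \<and> topspace T = X \<and>
     continuous_map (prod_topology T T) T (\<lambda>(x, y). seq_add x y) \<and>
     continuous_map (prod_topology euclidean T) T (\<lambda>(c, x). seq_smult c x) \<and>
     (\<forall>U x. openin T U \<and> x \<in> U \<longrightarrow>
        (\<exists>V. openin T V \<and> x \<in> V \<and> V \<subseteq> U \<and>
             (\<forall>y\<in>V. \<forall>z\<in>V. \<forall>t::real. 0 \<le> t \<and> t \<le> 1 \<longrightarrow>
                (\<lambda>j. of_real t * y j + of_real (1 - t) * z j) \<in> V))) \<and>
     completely_metrizable_space T \<and>
     (\<forall>j. continuous_map T euclidean (\<lambda>x. x j))"

definition cdual :: "seq set \<Rightarrow> seq topology \<Rightarrow> (seq \<Rightarrow> complex) set" where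
  "cdual X T = {f. (\<forall>x\<in>X. \<forall>y\<in>X. f (seq_add x y) = f x + f y) \<and>
                   (\<forall>c. \<forall>x\<in>X. f (seq_smult c x) = c * f x) \<and>
                   continuous_map T euclidean f}"

definition phi :: "seq set" where
  "phi = {x. finite {j. x j \<noteq> 0}}"

definition seq_section :: "nat \<Rightarrow> seq \<Rightarrow> seq" where
  "seq_section k x = (\<lambda>j. if j < k then x j else 0)"

definition Tn :: "(nat \<Rightarrow> nat) \<Rightarrow> (nat \<Rightarrow> nat) \<Rightarrow> nat \<Rightarrow> seq \<Rightarrow> seq" where
  "Tn p q n x = (\<lambda>j. (1 / of_nat (q n - p n)) * (\<Sum>k\<in>{p n<..q n}. seq_section k x j))"

definition DS :: "(nat \<Rightarrow> nat) \<Rightarrow> (nat \<Rightarrow> nat) \<Rightarrow> seq set \<Rightarrow> seq topology \<Rightarrow> seq set" where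
  "DS p q X T = {x\<in>X. limitin T (\<lambda>n. Tn p q n x) x sequentially}"

definition DW :: "(nat \<Rightarrow> nat) \<Rightarrow> (nat \<Rightarrow> nat) \<Rightarrow> seq set \<Rightarrow> seq topology \<Rightarrow> seq set" where
  "DW p q X T = {x\<in>X. \<forall>f\<in>cdual X T. (\<lambda>n. f (Tn p q n x)) \<longlonglongrightarrow> f x}"

definition DFplus :: "(nat \<Rightarrow> nat) \<Rightarrow> (nat \<Rightarrow> nat) \<Rightarrow> seq set \<Rightarrow> seq topology \<Rightarrow> seq set" where
  "DFplus p q X T = {x. \<forall>f\<in>cdual X T. convergent (\<lambda>n. f (Tn p q n x))}"

definition DBplus :: "(nat \<Rightarrow> nat) \<Rightarrow> (nat \<Rightarrow> nat) \<Rightarrow> seq set \<Rightarrow> seq topology \<Rightarrow> seq set" where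
  "DBplus p q X T = {x. \<forall>f\<in>cdual X T. bounded (range (\<lambda>n. f (Tn p q n x)))}"

definition DF :: "(nat \<Rightarrow> nat) \<Rightarrow> (nat \<Rightarrow> nat) \<Rightarrow> seq set \<Rightarrow> seq topology \<Rightarrow> seq set" where
  "DF p q X T = DFplus p q X T \<inter> X"

definition DB :: "(nat \<Rightarrow> nat) \<Rightarrow> (nat \<Rightarrow> nat) \<Rightarrow> seq set \<Rightarrow> seq topology \<Rightarrow> seq set" where
  "DB p q X T = DBplus p q X T \<inter> X"

end

(*
  DS <= DW because the functionals in X' are continuous; DW <= DF <= DB <= X are immediate.
  For x in phi with support below N, T_n x = sum_{j<N} w_n(j) x_j delta^j, where the weight
  w_n(j) is the proportion of k in (p n, q n] with j < k; it tends to 1 as q n -> infinity,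
  so T_n x -> x by continuity of the vector operations, i.e. phi <= DS.
  Every T_n x lies in phi, so for x in DW each f in X' vanishing on phi vanishes at x.
  If x were outside the closure of phi, the Hahn-Banach separation theorem in the locally
  convex space X would produce such an f with f x ~= 0. It is obtained as usual: choose a
  convex open W containing 0 and disjoint from x + phi; the Minkowski functional of W
  dominates the real functional m + t x |-> t on phi + Rx; its real-linear extension g to X
  is bounded by 1 on W inter -W, hence continuous, and f y = g y - i g (i y) is the
  required complex-linear functional.
*)

theory Submission
  imports Defs "HOL-Library.Function_Algebras"
begin

instantiation "fun" :: (type, real_vector) real_vector
begin

definition scaleR_fun :: "real \<Rightarrow> ('a \<Rightarrow> 'b) \<Rightarrow> 'a \<Rightarrow> 'b" where
  "scaleR_fun r f = (\<lambda>x. r *\<^sub>R f x)"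

instance
  by standard (simp_all add: scaleR_fun_def fun_eq_iff scaleR_add_right scaleR_add_left)

end

lemma scaleR_fun_apply [simp]: "(r *\<^sub>R f) x = r *\<^sub>R f x"
  by (simp add: scaleR_fun_def)

lemma seq_add_eq_plus: "seq_add x y = x + y"
  by (simp add: seq_add_def fun_eq_iff)

lemma seq_smult_of_real: "seq_smult (of_real r) x = r *\<^sub>R x"
  by (simp add: seq_smult_def fun_eq_iff scaleR_conv_of_real)

lemma seq_subspace_imp_subspace:
  assumes "seq_subspace M"
  shows "subspace M"
  using assms unfolding seq_subspace_def subspace_def
  by (simp add: seq_add_eq_plus flip: seq_smult_of_real zero_fun_def)

lemma seq_subspace_phi: "seq_subspace phi"
proof -
  have "{j. x j + y j \<noteq> 0} \<subseteq> {j. x j \<noteq> 0} \<union> {j. y j \<noteq> 0}" "{j. c * x j \<noteq> 0} \<subseteq> {j. x j \<noteq> 0}"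
    for x y :: seq and c
    by auto
  then show ?thesis
    unfolding seq_subspace_def seq_add_def seq_smult_def phi_def by (auto intro: finite_subset)
qed

lemma sum_fun_apply: "(\<Sum>j\<in>J. f j) i = (\<Sum>j\<in>J. f j i)"
  by (induction J rule: infinite_finite_induct) auto

section \<open>The Hahn--Banach theorem\<close>

definition sublinear_on :: "'a::real_vector set \<Rightarrow> ('a \<Rightarrow> real) \<Rightarrow> bool" where
  "sublinear_on X p \<longleftrightarrow>
     (\<forall>a\<in>X. \<forall>b\<in>X. p (a + b) \<le> p a + p b) \<and> (\<forall>a\<in>X. \<forall>t>0. p (t *\<^sub>R a) = t * p a)"

lemma sublinear_on_add_le:
  "sublinear_on X p \<Longrightarrow> a \<in> X \<Longrightarrow> b \<in> X \<Longrightarrow> p (a + b) \<le> p a + p b"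
  unfolding sublinear_on_def by blast

lemma sublinear_on_scaleR:
  "sublinear_on X p \<Longrightarrow> a \<in> X \<Longrightarrow> t > 0 \<Longrightarrow> p (t *\<^sub>R a) = t * p a"
  unfolding sublinear_on_def by blast

lemma sublinear_on_zero:
  assumes "sublinear_on X p" "0 \<in> X"
  shows "p 0 = 0"
  using sublinear_on_scaleR[OF assms, of 2] by simp

text \<open>A real linear functional defined on part of the space is encoded by its graph,
  a subspace of \<open>'a \<times> real\<close>; extending the functional means enlarging the graph.\<close>
definition dominated_graph :: "'a::real_vector set \<Rightarrow> ('a \<Rightarrow> real) \<Rightarrow> ('a \<times> real) set \<Rightarrow> bool" where
  "dominated_graph X p G \<longleftrightarrow> subspace G \<and> (\<forall>(a, r)\<in>G. a \<in> X \<and> r \<le> p a)"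

lemma dominated_graph_functional:
  assumes "dominated_graph X p G" "sublinear_on X p" "subspace X" "(a, r) \<in> G" "(a, s) \<in> G"
  shows "r = s"
proof -
  have G: "subspace G" and dom: "\<And>b u. (b, u) \<in> G \<Longrightarrow> u \<le> p b"
    using assms(1) unfolding dominated_graph_def by auto
  have "(0, r - s) \<in> G" "(0, s - r) \<in> G"
    using subspace_diff[OF G assms(4) assms(5)] subspace_diff[OF G assms(5) assms(4)] by simp_all
  then have "r - s \<le> p 0" "s - r \<le> p 0"
    using dom by blast+
  then show ?thesis
    using sublinear_on_zero[OF assms(2) subspace_0[OF assms(3)]] by linarith
qed

lemma dominated_graph_extension_constant:
  assumes "dominated_graph X p G" "sublinear_on X p" "subspace X" "y \<in> X"
  obtains c where "\<And>a r. (a, r) \<in> G \<Longrightarrow> r - p (a - y) \<le> c"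
    and "\<And>b s. (b, s) \<in> G \<Longrightarrow> c \<le> p (b + y) - s"
proof -
  have G: "subspace G" and GX: "\<And>b u. (b, u) \<in> G \<Longrightarrow> b \<in> X"
    and dom: "\<And>b u. (b, u) \<in> G \<Longrightarrow> u \<le> p b"
    using assms(1) unfolding dominated_graph_def by auto
  have sep: "r - p (a - y) \<le> p (b + y) - s" if "(a, r) \<in> G" "(b, s) \<in> G" for a r b s
  proof -
    have "r + s \<le> p (a + b)"
      using dom subspace_add[OF G that] by fastforce
    also have "\<dots> = p ((a - y) + (b + y))"
      by simp
    also have "\<dots> \<le> p (a - y) + p (b + y)"
      using that GX assms(3,4) by (intro sublinear_on_add_le[OF assms(2)] subspace_add subspace_diff) auto
    finally show ?thesis
      by simp
  qed
  define S where "S = {r - p (a - y) | a r. (a, r) \<in> G}"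
  have "(0, 0) \<in> G"
    using subspace_0[OF G] by (simp add: zero_prod_def)
  then have "S \<noteq> {}" and "bdd_above S"
    using sep unfolding S_def bdd_above_def by blast+
  show thesis
  proof (rule that[of "Sup S"])
    show "r - p (a - y) \<le> Sup S" if "(a, r) \<in> G" for a r
      using that \<open>bdd_above S\<close> by (intro cSup_upper) (auto simp: S_def)
    show "Sup S \<le> p (b + y) - s" if "(b, s) \<in> G" for b s
      using \<open>S \<noteq> {}\<close> sep that by (intro cSup_least) (auto simp: S_def)
  qed
qed

lemma dominated_graph_extension_bound:
  assumes G: "dominated_graph X p G" and p: "sublinear_on X p" and X: "subspace X" and y: "y \<in> X"
    and c_lower: "\<And>a r. (a, r) \<in> G \<Longrightarrow> r - p (a - y) \<le> c"
    and c_upper: "\<And>b s. (b, s) \<in> G \<Longrightarrow> c \<le> p (b + y) - s"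
    and ar: "(a, r) \<in> G"
  shows "r + t * c \<le> p (a + t *\<^sub>R y)"
proof -
  have Gsub: "subspace G" and aX: "a \<in> X" and dom: "r \<le> p a"
    using G ar unfolding dominated_graph_def by auto
  show ?thesis
  proof (cases t "0 :: real" rule: linorder_cases)
    case less
    define s where "s = - t"
    have s: "s > 0"
      using less by (simp add: s_def)
    have "(inverse s *\<^sub>R a, inverse s * r) \<in> G"
      using subspace_scale[OF Gsub ar, of "inverse s"] by simp
    then have le: "inverse s * r - p (inverse s *\<^sub>R a - y) \<le> c"
      by (rule c_lower)
    have "a + t *\<^sub>R y = s *\<^sub>R (inverse s *\<^sub>R a - y)"
      using s by (simp add: s_def scaleR_diff_right)
    then have "p (a + t *\<^sub>R y) = s * p (inverse s *\<^sub>R a - y)"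
      using s aX y X by (simp add: sublinear_on_scaleR[OF p] subspace_diff subspace_scale)
    with le s show ?thesis
      by (simp add: s_def field_simps)
  next
    case equal
    then show ?thesis
      using dom by simp
  next
    case greater
    have "(inverse t *\<^sub>R a, inverse t * r) \<in> G"
      using subspace_scale[OF Gsub ar, of "inverse t"] by simp
    then have le: "c \<le> p (inverse t *\<^sub>R a + y) - inverse t * r"
      by (rule c_upper)
    have "a + t *\<^sub>R y = t *\<^sub>R (inverse t *\<^sub>R a + y)"
      using greater by (simp add: scaleR_add_right)
    then have "p (a + t *\<^sub>R y) = t * p (inverse t *\<^sub>R a + y)"
      using greater aX y X by (simp add: sublinear_on_scaleR[OF p] subspace_add subspace_scale)
    with le greater show ?thesis
      by (simp add: field_simps)
  qed
qed

lemma dominated_graph_extend: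
  assumes G: "dominated_graph X p G" and p: "sublinear_on X p" and X: "subspace X"
    and y: "y \<in> X" "\<And>r. (y, r) \<notin> G"
  shows "\<exists>G'. dominated_graph X p G' \<and> G \<subset> G'"
proof -
  have GX: "\<And>b u. (b, u) \<in> G \<Longrightarrow> b \<in> X" and Gsub: "subspace G"
    using G unfolding dominated_graph_def by auto
  obtain c where c_lower: "\<And>a r. (a, r) \<in> G \<Longrightarrow> r - p (a - y) \<le> c"
    and c_upper: "\<And>b s. (b, s) \<in> G \<Longrightarrow> c \<le> p (b + y) - s"
    using dominated_graph_extension_constant[OF G p X y(1)] by blast
  define G' where "G' = {g + h | g h. g \<in> G \<and> h \<in> span {(y, c)}}"
  have G'_iff: "z \<in> G' \<longleftrightarrow> (\<exists>a r t. (a, r) \<in> G \<and> z = (a + t *\<^sub>R y, r + t * c))" for z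
    unfolding G'_def span_singleton by force
  have "dominated_graph X p G'"
    unfolding dominated_graph_def
  proof
    show "subspace G'"
      unfolding G'_def by (intro subspace_sums Gsub subspace_span)
    show "\<forall>(a, r)\<in>G'. a \<in> X \<and> r \<le> p a"
      using dominated_graph_extension_bound[OF G p X y(1) c_lower c_upper] GX y(1) X
      by (auto simp: G'_iff intro!: subspace_add subspace_scale)
  qed
  moreover have "G \<subseteq> G'"
    by (force simp: G'_iff)
  moreover have "(y, c) \<in> G'"
    using subspace_0[OF Gsub] by (force simp: G'_iff zero_prod_def)
  ultimately show ?thesis
    using y(2) by blast
qed

lemma subspace_Union_chain:
  assumes "C \<noteq> {}" "\<And>S. S \<in> C \<Longrightarrow> subspace S" "\<And>S S'. S \<in> C \<Longrightarrow> S' \<in> C \<Longrightarrow> S \<subseteq> S' \<or> S' \<subseteq> S"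
  shows "subspace (\<Union>C)"
  unfolding subspace_def
proof (intro conjI ballI allI)
  show "0 \<in> \<Union>C"
    using assms(1,2) subspace_0 by blast
next
  fix x y assume "x \<in> \<Union>C" "y \<in> \<Union>C"
  then obtain S S' where S: "S \<in> C" "S' \<in> C" "x \<in> S" "y \<in> S'"
    by blast
  show "x + y \<in> \<Union>C"
  proof (cases "S \<subseteq> S'")
    case True
    then show ?thesis using S subspace_add[OF assms(2)[OF S(2)]] by blast
  next
    case False
    then have "S' \<subseteq> S" using assms(3)[OF S(1,2)] by blast
    then show ?thesis using S subspace_add[OF assms(2)[OF S(1)]] by blast
  qed
next
  fix c x assume "x \<in> \<Union>C"
  then show "c *\<^sub>R x \<in> \<Union>C"
    using assms(2) subspace_scale by blast
qed

lemma dominated_graph_total_extension: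
  assumes X: "subspace X" and p: "sublinear_on X p" and G0: "dominated_graph X p G0"
  obtains M where "dominated_graph X p M" "G0 \<subseteq> M" "\<And>y. y \<in> X \<Longrightarrow> \<exists>r. (y, r) \<in> M"
proof -
  define \<A> where "\<A> = {G. dominated_graph X p G \<and> G0 \<subseteq> G}"
  have "\<exists>M\<in>\<A>. \<forall>G\<in>\<A>. M \<subseteq> G \<longrightarrow> G = M"
  proof (rule subset_Zorn_nonempty)
    show "\<A> \<noteq> {}"
      using G0 unfolding \<A>_def by blast
    show "\<Union>C \<in> \<A>" if "C \<noteq> {}" "subset.chain \<A> C" for C
    proof -
      have "C \<subseteq> \<A>" and chain: "\<And>S S'. S \<in> C \<Longrightarrow> S' \<in> C \<Longrightarrow> S \<subseteq> S' \<or> S' \<subseteq> S"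
        using that(2) unfolding subset.chain_def by auto
      have "subspace (\<Union>C)"
        using \<open>C \<subseteq> \<A>\<close> chain
        by (intro subspace_Union_chain[OF that(1)]) (auto simp: \<A>_def dominated_graph_def)
      moreover have "\<forall>(a, r)\<in>\<Union>C. a \<in> X \<and> r \<le> p a" "G0 \<subseteq> \<Union>C"
        using \<open>C \<subseteq> \<A>\<close> that(1) unfolding \<A>_def dominated_graph_def by fast+
      ultimately show ?thesis
        unfolding \<A>_def dominated_graph_def by blast
    qed
  qed
  then obtain M where "M \<in> \<A>" and M_max: "\<forall>G\<in>\<A>. M \<subseteq> G \<longrightarrow> G = M"
    by blast
  then have M: "dominated_graph X p M" "G0 \<subseteq> M"
    unfolding \<A>_def by auto
  show thesis
  proof (rule that[OF M])
    show "\<exists>r. (y, r) \<in> M" if y: "y \<in> X" for y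
    proof (rule ccontr)
      assume "\<nexists>r. (y, r) \<in> M"
      then obtain G where "dominated_graph X p G" "M \<subset> G"
        using dominated_graph_extend[OF M(1) p X y] by blast
      then show False
        using M_max M(2) unfolding \<A>_def by blast
    qed
  qed
qed

theorem hahn_banach:
  assumes X: "subspace X" and p: "sublinear_on X p" and G0: "dominated_graph X p G0"
  obtains g where "\<And>a b. a \<in> X \<Longrightarrow> b \<in> X \<Longrightarrow> g (a + b) = g a + g b"
    and "\<And>a t. a \<in> X \<Longrightarrow> g (t *\<^sub>R a) = t * g a"
    and "\<And>a. a \<in> X \<Longrightarrow> g a \<le> p a"
    and "\<And>a r. (a, r) \<in> G0 \<Longrightarrow> g a = r"
proof -
  obtain M where M: "dominated_graph X p M" "G0 \<subseteq> M" and total: "\<And>y. y \<in> X \<Longrightarrow> \<exists>r. (y, r) \<in> M"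
    using dominated_graph_total_extension[OF X p G0] by blast
  have Msub: "subspace M" and MX: "\<And>a r. (a, r) \<in> M \<Longrightarrow> a \<in> X"
    and Mdom: "\<And>a r. (a, r) \<in> M \<Longrightarrow> r \<le> p a"
    using M(1) unfolding dominated_graph_def by auto
  define g where "g y = (SOME r. (y, r) \<in> M)" for y
  have g_in: "(y, g y) \<in> M" if "y \<in> X" for y
    unfolding g_def using total[OF that] by (rule someI_ex)
  have g_eq: "g y = r" if "(y, r) \<in> M" for y r
    using dominated_graph_functional[OF M(1) p X g_in[OF MX[OF that]] that] .
  show thesis
  proof (rule that)
    show "g (a + b) = g a + g b" if "a \<in> X" "b \<in> X" for a b
      using subspace_add[OF Msub g_in[OF that(1)] g_in[OF that(2)]] by (intro g_eq) simp
    show "g (t *\<^sub>R a) = t * g a" if "a \<in> X" for a t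
      using subspace_scale[OF Msub g_in[OF that]] by (intro g_eq) simp
    show "g a \<le> p a" if "a \<in> X" for a
      using Mdom g_in that by blast
    show "g a = r" if "(a, r) \<in> G0" for a r
      using M(2) that g_eq by blast
  qed
qed

section \<open>The Minkowski functional\<close>

definition minkowski_functional :: "'a::real_vector set \<Rightarrow> 'a \<Rightarrow> real" where
  "minkowski_functional W y = Inf {t. 0 < t \<and> inverse t *\<^sub>R y \<in> W}"

lemma minkowski_functional_le:
  assumes "0 < t" "inverse t *\<^sub>R y \<in> W"
  shows "minkowski_functional W y \<le> t"
  unfolding minkowski_functional_def
  by (rule cInf_lower) (use assms in \<open>auto intro: bdd_belowI[of _ 0]\<close>)

lemma minkowski_functional_nonneg:
  assumes "\<exists>t>0. inverse t *\<^sub>R y \<in> W"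
  shows "0 \<le> minkowski_functional W y"
  unfolding minkowski_functional_def
  by (rule cInf_greatest) (use assms in auto)

lemma minkowski_functional_less_imp_mem:
  assumes W: "convex W" "0 \<in> W" and y: "\<exists>t>0. inverse t *\<^sub>R y \<in> W"
    and less: "minkowski_functional W y < s"
  shows "inverse s *\<^sub>R y \<in> W"
proof -
  obtain t where t: "0 < t" "inverse t *\<^sub>R y \<in> W" "t < s"
    using cInf_lessD[of "{t. 0 < t \<and> inverse t *\<^sub>R y \<in> W}" s] y less
    unfolding minkowski_functional_def by auto
  have "(t / s) *\<^sub>R (inverse t *\<^sub>R y) + (1 - t / s) *\<^sub>R 0 \<in> W"
    using t W by (intro convexD) auto
  moreover have "(t / s) *\<^sub>R (inverse t *\<^sub>R y) + (1 - t / s) *\<^sub>R 0 = inverse s *\<^sub>R y"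
    using t by (simp add: field_simps)
  ultimately show ?thesis
    by metis
qed

lemma minkowski_functional_scaleR_le:
  assumes W: "convex W" "0 \<in> W" and y: "\<exists>t>0. inverse t *\<^sub>R y \<in> W" and "0 < \<sigma>"
  shows "minkowski_functional W (\<sigma> *\<^sub>R y) \<le> \<sigma> * minkowski_functional W y"
proof (rule field_le_epsilon)
  fix e :: real assume "0 < e"
  define s where "s = minkowski_functional W y + e / \<sigma>"
  have "minkowski_functional W y < s" "0 < s"
    using \<open>0 < e\<close> \<open>0 < \<sigma>\<close> minkowski_functional_nonneg[OF y] by (auto simp: s_def add_nonneg_pos)
  moreover have "inverse (\<sigma> * s) *\<^sub>R (\<sigma> *\<^sub>R y) = inverse s *\<^sub>R y"
    using \<open>0 < \<sigma>\<close> \<open>0 < s\<close> by (simp add: field_simps)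
  ultimately have "inverse (\<sigma> * s) *\<^sub>R (\<sigma> *\<^sub>R y) \<in> W"
    using minkowski_functional_less_imp_mem[OF W y] by metis
  then have "minkowski_functional W (\<sigma> *\<^sub>R y) \<le> \<sigma> * s"
    using \<open>0 < \<sigma>\<close> \<open>0 < s\<close> by (intro minkowski_functional_le) auto
  then show "minkowski_functional W (\<sigma> *\<^sub>R y) \<le> \<sigma> * minkowski_functional W y + e"
    using \<open>0 < \<sigma>\<close> by (simp add: s_def algebra_simps)
qed

lemma minkowski_functional_add_le:
  assumes W: "convex W" "0 \<in> W"
    and a: "\<exists>t>0. inverse t *\<^sub>R a \<in> W" and b: "\<exists>t>0. inverse t *\<^sub>R b \<in> W"
  shows "minkowski_functional W (a + b) \<le> minkowski_functional W a + minkowski_functional W b"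
proof (rule field_le_epsilon)
  fix e :: real assume "0 < e"
  define s where "s = minkowski_functional W a + e / 2"
  define t where "t = minkowski_functional W b + e / 2"
  have s: "0 < s" "inverse s *\<^sub>R a \<in> W" and t: "0 < t" "inverse t *\<^sub>R b \<in> W"
    using \<open>0 < e\<close> minkowski_functional_nonneg[OF a] minkowski_functional_nonneg[OF b]
      minkowski_functional_less_imp_mem[OF W a, of s] minkowski_functional_less_imp_mem[OF W b, of t]
    by (auto simp: s_def t_def)
  have "(s / (s + t)) *\<^sub>R (inverse s *\<^sub>R a) + (t / (s + t)) *\<^sub>R (inverse t *\<^sub>R b) \<in> W"
    using s t W(1) by (intro convexD) (auto simp: add_divide_distrib[symmetric])
  also have "(s / (s + t)) *\<^sub>R (inverse s *\<^sub>R a) + (t / (s + t)) *\<^sub>R (inverse t *\<^sub>R b)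
      = inverse (s + t) *\<^sub>R (a + b)"
    using s t by (simp add: scaleR_add_right field_simps)
  finally have "minkowski_functional W (a + b) \<le> s + t"
    using s t by (intro minkowski_functional_le) auto
  then show "minkowski_functional W (a + b) \<le> minkowski_functional W a + minkowski_functional W b + e"
    by (simp add: s_def t_def)
qed

lemma sublinear_on_minkowski_functional:
  assumes W: "convex W" "0 \<in> W" and absorbing: "\<And>y. y \<in> X \<Longrightarrow> \<exists>t>0. inverse t *\<^sub>R y \<in> W"
  shows "sublinear_on X (minkowski_functional W)"
  unfolding sublinear_on_def
proof (intro conjI ballI allI impI)
  show "minkowski_functional W (a + b) \<le> minkowski_functional W a + minkowski_functional W b"
    if "a \<in> X" "b \<in> X" for a b
    using minkowski_functional_add_le[OF W absorbing absorbing] that .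
  fix y and \<sigma> :: real assume y: "y \<in> X" and "0 < \<sigma>"
  have "\<exists>t>0. inverse t *\<^sub>R (\<sigma> *\<^sub>R y) \<in> W"
  proof -
    obtain t where "0 < t" "inverse t *\<^sub>R y \<in> W"
      using absorbing[OF y] by blast
    then show ?thesis
      using \<open>0 < \<sigma>\<close> by (intro exI[of _ "\<sigma> * t"]) (simp add: field_simps)
  qed
  from minkowski_functional_scaleR_le[OF W this, of "inverse \<sigma>"]
  have "minkowski_functional W y \<le> inverse \<sigma> * minkowski_functional W (\<sigma> *\<^sub>R y)"
    using \<open>0 < \<sigma>\<close> by simp
  with minkowski_functional_scaleR_le[OF W absorbing[OF y] \<open>0 < \<sigma>\<close>] \<open>0 < \<sigma>\<close>
  show "minkowski_functional W (\<sigma> *\<^sub>R y) = \<sigma> * minkowski_functional W y"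
    by (simp add: field_simps)
qed

lemma subspace_line_over_subspace:
  assumes "subspace M"
  shows "subspace {(m + t *\<^sub>R x, t) | m t. m \<in> M}" (is "subspace ?G")
  unfolding subspace_def
proof (intro conjI ballI allI)
  show "0 \<in> ?G"
    using subspace_0[OF assms] by (force simp: zero_prod_def)
  show "z + z' \<in> ?G" if "z \<in> ?G" "z' \<in> ?G" for z z'
    using that subspace_add[OF assms]
    by clarsimp (metis (no_types, lifting) add.assoc add.left_commute scaleR_add_left)
  show "c *\<^sub>R z \<in> ?G" if "z \<in> ?G" for c z
    using that subspace_scale[OF assms] by (force simp: scaleR_add_right)
qed

lemma dominated_graph_line_over_subspace:
  assumes W: "convex W" "0 \<in> W" and absorbing: "\<And>y. y \<in> X \<Longrightarrow> \<exists>t>0. inverse t *\<^sub>R y \<in> W"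
    and X: "subspace X" and M: "subspace M" "M \<subseteq> X" and x: "x \<in> X"
    and avoid: "\<And>m. m \<in> M \<Longrightarrow> x + m \<notin> W"
  shows "dominated_graph X (minkowski_functional W) {(m + t *\<^sub>R x, t) | m t. m \<in> M}"
    (is "dominated_graph X ?p ?G")
  unfolding dominated_graph_def
proof (intro conjI ballI)
  show "subspace ?G"
    using M(1) by (rule subspace_line_over_subspace)
  fix z assume "z \<in> ?G"
  then obtain m t where z: "z = (m + t *\<^sub>R x, t)" and m: "m \<in> M"
    by blast
  have mX: "m \<in> X"
    using m M(2) by blast
  have "t \<le> ?p (m + t *\<^sub>R x)"
  proof (cases "t > 0")
    case True
    have "1 \<le> ?p (inverse t *\<^sub>R m + x)"
    proof (rule ccontr)
      assume "\<not> 1 \<le> ?p (inverse t *\<^sub>R m + x)"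
      then have "inverse 1 *\<^sub>R (inverse t *\<^sub>R m + x) \<in> W"
        using mX x X by (intro minkowski_functional_less_imp_mem[OF W absorbing])
          (auto intro: subspace_add subspace_scale)
      then show False
        using avoid[OF subspace_scale[OF M(1) m, of "inverse t"]] by (simp add: add.commute)
    qed
    moreover have "m + t *\<^sub>R x = t *\<^sub>R (inverse t *\<^sub>R m + x)"
      using True by (simp add: scaleR_add_right)
    ultimately show ?thesis
      using True mX x X sublinear_on_scaleR[OF sublinear_on_minkowski_functional[OF W absorbing]]
      by (simp add: subspace_add subspace_scale)
  next
    case False
    then show ?thesis
      using minkowski_functional_nonneg[OF absorbing] mX x X
      by (meson order.trans not_le less_imp_le subspace_add subspace_scale)
  qed
  then show "case z of (a, r) \<Rightarrow> a \<in> X \<and> r \<le> ?p a"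
    using z mX x X by (simp add: subspace_add subspace_scale)
qed

section \<open>The averaging operators \<open>T\<^sub>n\<close>\<close>

text \<open>The proportion of the sections \<open>x\<^sup>(\<^sup>k\<^sup>)\<close>, \<open>p n < k \<le> q n\<close>, that contain the (0-based)
  coordinate \<open>j\<close>, i.e. have \<open>j < k\<close>; truncated subtraction makes it \<open>0\<close> for \<open>j \<ge> q n\<close>.\<close>
definition Tn_weight :: "(nat \<Rightarrow> nat) \<Rightarrow> (nat \<Rightarrow> nat) \<Rightarrow> nat \<Rightarrow> nat \<Rightarrow> real" where
  "Tn_weight p q n j = real (q n - max (p n) j) / real (q n - p n)"

lemma Tn_apply: "Tn p q n x j = Tn_weight p q n j *\<^sub>R x j"
proof -
  have "(\<Sum>k\<in>{p n<..q n}. seq_section k x j) = (\<Sum>k\<in>{k \<in> {p n<..q n}. j < k}. x j)"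
    unfolding seq_section_def by (rule sum.inter_filter[symmetric]) simp
  also have "{k \<in> {p n<..q n}. j < k} = {max (p n) j<..q n}"
    by auto
  finally show ?thesis
    by (simp add: Tn_def Tn_weight_def scaleR_conv_of_real)
qed

lemma Tn_in_phi: "Tn p q n x \<in> phi"
proof -
  have "{j. Tn p q n x j \<noteq> 0} \<subseteq> {..<q n}"
    by (auto simp: Tn_apply Tn_weight_def)
  then show ?thesis
    unfolding phi_def mem_Collect_eq by (rule finite_subset) simp
qed

lemma Tn_weight_le_one: "p n < q n \<Longrightarrow> Tn_weight p q n j \<le> 1"
  by (simp add: Tn_weight_def)

lemma Tn_weight_lower_bound:
  assumes "p n < q n" "j < q n"
  shows "1 - real j / real (q n) \<le> Tn_weight p q n j"
proof (cases "p n \<le> j")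
  case True
  have "1 - real j / real (q n) = (real (q n) - real j) / real (q n)"
    using assms(2) by (simp add: field_simps)
  also have "\<dots> \<le> (real (q n) - real j) / real (q n - p n)"
    using assms by (intro divide_left_mono) auto
  finally show ?thesis
    using True assms by (simp add: Tn_weight_def)
next
  case False
  then show ?thesis
    using assms(1) by (simp add: Tn_weight_def)
qed

lemma Tn_weight_tendsto_one:
  assumes pq: "\<And>n. p n < q n" and q: "filterlim q at_top sequentially"
  shows "(\<lambda>n. Tn_weight p q n j) \<longlonglongrightarrow> 1"
proof (rule tendsto_sandwich)
  have "\<forall>\<^sub>F n in sequentially. Suc j \<le> q n"
    using q filterlim_at_top by blast
  then show "\<forall>\<^sub>F n in sequentially. 1 - real j / real (q n) \<le> Tn_weight p q n j"
    by (rule eventually_mono) (simp add: Tn_weight_lower_bound pq)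
  show "\<forall>\<^sub>F n in sequentially. Tn_weight p q n j \<le> 1"
    by (simp add: Tn_weight_le_one pq)
  have "filterlim (\<lambda>n. real (q n)) at_top sequentially"
    by (rule filterlim_compose[OF filterlim_real_sequentially q])
  then have "(\<lambda>n. real j / real (q n)) \<longlonglongrightarrow> 0"
    by (intro tendsto_divide_0[OF tendsto_const] filterlim_at_top_imp_at_infinity)
  then show "(\<lambda>n. 1 - real j / real (q n)) \<longlonglongrightarrow> 1"
    using tendsto_diff[OF tendsto_const, of _ 0 sequentially 1] by simp
qed simp

section \<open>FK-spaces\<close>

locale fk_space =
  fixes X :: "seq set" and T :: "seq topology"
  assumes FK: "FK_space X T"
begin

lemma topspace_eq [simp]: "topspace T = X"
  using FK by (simp add: FK_space_def)

lemma seq_subspace_carrier: "seq_subspace X"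
  using FK by (simp add: FK_space_def)

lemma subspace_carrier: "subspace X"
  by (rule seq_subspace_imp_subspace[OF seq_subspace_carrier])

lemma continuous_map_vector_add:
  assumes "continuous_map S T f" "continuous_map S T g"
  shows "continuous_map S T (\<lambda>y. f y + g y)"
proof -
  have "continuous_map (prod_topology T T) T (\<lambda>(x, y). x + y)"
    using FK by (simp add: FK_space_def seq_add_eq_plus)
  from continuous_map_compose[OF continuous_map_pairedI[OF assms] this] show ?thesis
    by (simp add: o_def)
qed

lemma continuous_map_seq_smult:
  assumes "continuous_map S euclidean c" "continuous_map S T f"
  shows "continuous_map S T (\<lambda>y. seq_smult (c y) (f y))"
proof -
  have "continuous_map (prod_topology euclidean T) T (\<lambda>(c, x). seq_smult c x)"
    using FK by (simp add: FK_space_def)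
  from continuous_map_compose[OF continuous_map_pairedI[OF assms] this] show ?thesis
    by (simp add: o_def)
qed

lemma continuous_map_vector_scaleR:
  assumes "continuous_map S euclideanreal c" "continuous_map S T f"
  shows "continuous_map S T (\<lambda>y. c y *\<^sub>R f y)"
proof -
  have "continuous_map S euclidean (\<lambda>y. complex_of_real (c y))"
    using assms(1) by (simp add: continuous_map_atin tendsto_of_real)
  from continuous_map_seq_smult[OF this assms(2)] show ?thesis
    by (simp add: seq_smult_of_real)
qed

lemma limitin_add:
  assumes "limitin T f a F" "limitin T g b F"
  shows "limitin T (\<lambda>n. f n + g n) (a + b) F"
proof -
  have "continuous_map (prod_topology T T) T (\<lambda>z. fst z + snd z)"
    by (intro continuous_map_vector_add continuous_map_fst continuous_map_snd)
  moreover have "limitin (prod_topology T T) (\<lambda>n. (f n, g n)) (a, b) F"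
    using assms by (simp add: limitin_pairwise o_def)
  ultimately have "limitin T ((\<lambda>z. fst z + snd z) \<circ> (\<lambda>n. (f n, g n))) (fst (a, b) + snd (a, b)) F"
    by (rule continuous_map_limit)
  then show ?thesis
    by (simp add: o_def)
qed

lemma limitin_scaleR:
  assumes "(c \<longlongrightarrow> d) F" "v \<in> X"
  shows "limitin T (\<lambda>n. c n *\<^sub>R v) (d *\<^sub>R v) F"
proof -
  have "continuous_map euclideanreal T (\<lambda>t. t *\<^sub>R v)"
    using assms(2) by (intro continuous_map_vector_scaleR continuous_map_id_subt) auto
  from continuous_map_limit[OF this, of c] show ?thesis
    using assms(1) by (simp add: o_def)
qed

lemma limitin_sum_scaleR:
  assumes "finite J" "\<And>j. j \<in> J \<Longrightarrow> v j \<in> X" "\<And>j. j \<in> J \<Longrightarrow> (\<lambda>n. c n j) \<longlonglongrightarrow> d j"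
  shows "limitin T (\<lambda>n. \<Sum>j\<in>J. c n j *\<^sub>R v j) (\<Sum>j\<in>J. d j *\<^sub>R v j) sequentially"
  using assms
proof (induction J rule: finite_induct)
  case empty
  then show ?case
    using subspace_0[OF subspace_carrier] by (simp add: zero_fun_def)
next
  case (insert j J)
  have "limitin T (\<lambda>n. c n j *\<^sub>R v j) (d j *\<^sub>R v j) sequentially"
    using insert.prems by (intro limitin_scaleR) auto
  moreover have "limitin T (\<lambda>n. \<Sum>j\<in>J. c n j *\<^sub>R v j) (\<Sum>j\<in>J. d j *\<^sub>R v j) sequentially"
    using insert.prems by (intro insert.IH) auto
  ultimately have "limitin T (\<lambda>n. c n j *\<^sub>R v j + (\<Sum>j\<in>J. c n j *\<^sub>R v j))
      (d j *\<^sub>R v j + (\<Sum>j\<in>J. d j *\<^sub>R v j)) sequentially"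
    by (rule limitin_add)
  moreover have "(\<Sum>j\<in>insert j J. f j) = f j + (\<Sum>j\<in>J. f j)" for f :: "_ \<Rightarrow> seq"
    using insert.hyps by (rule sum.insert)
  ultimately show ?case
    by (simp only:)
qed

lemma convex_open_neighbourhood:
  assumes "openin T U" "x \<in> U"
  obtains V where "openin T V" "x \<in> V" "V \<subseteq> U" "convex V"
proof -
  obtain V where V: "openin T V" "x \<in> V" "V \<subseteq> U"
    and segment: "\<And>y z t. y \<in> V \<Longrightarrow> z \<in> V \<Longrightarrow> 0 \<le> t \<Longrightarrow> t \<le> 1 \<Longrightarrow>
        (\<lambda>j. of_real t * y j + of_real (1 - t) * z j) \<in> V"
    using FK assms unfolding FK_space_def by meson
  have "convex V"
  proof (rule convexI)
    fix y z and u v :: real assume "y \<in> V" "z \<in> V" "0 \<le> u" "0 \<le> v" "u + v = 1"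
    then have "(\<lambda>j. of_real u * y j + of_real (1 - u) * z j) \<in> V"
      by (intro segment) auto
    moreover have "(\<lambda>j. of_real u * y j + of_real (1 - u) * z j) = u *\<^sub>R y + v *\<^sub>R z"
      using \<open>u + v = 1\<close> by (auto simp: fun_eq_iff scaleR_conv_of_real simp flip: of_real_diff)
    ultimately show "u *\<^sub>R y + v *\<^sub>R z \<in> V"
      by simp
  qed
  with V show thesis
    using that by blast
qed

lemma open_zero_neighbourhood_absorbing:
  assumes "openin T W" "0 \<in> W" "y \<in> X"
  shows "\<exists>t>0. inverse t *\<^sub>R y \<in> W"
proof -
  have "continuous_map euclideanreal T (\<lambda>s. s *\<^sub>R y)"
    using assms(3) by (intro continuous_map_vector_scaleR continuous_map_id_subt) auto
  then have "open {s. s *\<^sub>R y \<in> W}"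
    using openin_continuous_map_preimage[OF _ assms(1)] by fastforce
  moreover have "0 \<in> {s. s *\<^sub>R y \<in> W}"
    using assms(2) by simp
  ultimately obtain d where "0 < d" "ball 0 d \<subseteq> {s. s *\<^sub>R y \<in> W}"
    using open_contains_ball by blast
  then have "inverse (2 / d) *\<^sub>R y \<in> W"
    by (auto simp: subset_eq)
  then show ?thesis
    using \<open>0 < d\<close> by (intro exI[of _ "2 / d"]) auto
qed

lemma continuous_map_if_bounded_near_zero:
  assumes add: "\<And>a b. a \<in> X \<Longrightarrow> b \<in> X \<Longrightarrow> g (a + b) = g a + g b"
    and scale: "\<And>a t. a \<in> X \<Longrightarrow> g (t *\<^sub>R a) = t * g a"
    and U: "openin T U" "0 \<in> U" and bounded: "\<And>z. z \<in> U \<Longrightarrow> \<bar>g z\<bar> \<le> 1"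
  shows "continuous_map T euclideanreal g"
proof -
  have "\<exists>V. openin T V \<and> y0 \<in> V \<and> (\<forall>y\<in>V. dist (g y) (g y0) < e)"
    if y0: "y0 \<in> topspace T" and "0 < e" for y0 e
  proof -
    define h where "h = (\<lambda>y. (2 / e) *\<^sub>R (y - y0))"
    have "- y0 \<in> X"
      using y0 subspace_neg[OF subspace_carrier] by simp
    then have "continuous_map T T (\<lambda>y. (2 / e) *\<^sub>R (y + - y0))"
      by (intro continuous_map_vector_scaleR continuous_map_vector_add) auto
    then have "continuous_map T T h"
      by (simp add: h_def)
    then have "openin T {y \<in> topspace T. h y \<in> U}"
      using U(1) by (rule openin_continuous_map_preimage)
    moreover have "y0 \<in> {y \<in> topspace T. h y \<in> U}"
      using y0 U(2) by (simp add: h_def)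
    moreover have "dist (g y) (g y0) < e" if "y \<in> topspace T" "h y \<in> U" for y
    proof -
      have "y - y0 \<in> X"
        using that(1) y0 subspace_diff[OF subspace_carrier] by simp
      then have "g y = g (y - y0) + g y0"
        using add[of "y - y0" y0] y0 by simp
      then have "g (h y) = (2 / e) * (g y - g y0)"
        using scale[OF \<open>y - y0 \<in> X\<close>] by (simp add: h_def)
      then have "(2 / e) * \<bar>g y - g y0\<bar> \<le> 1"
        using bounded[OF that(2)] \<open>0 < e\<close> by (simp only: abs_mult) simp
      then show ?thesis
        using \<open>0 < e\<close> by (simp add: dist_real_def field_simps)
    qed
    ultimately show ?thesis
      by blast
  qed
  then show ?thesis
    using Met_TC.continuous_map_to_metric[of T g] by (simp add: dist_commute)
qed

lemma seq_smult_carrier: "a \<in> X \<Longrightarrow> seq_smult c a \<in> X"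
  using seq_subspace_carrier by (simp add: seq_subspace_def)

lemma complexification_in_cdual:
  assumes add: "\<And>a b. a \<in> X \<Longrightarrow> b \<in> X \<Longrightarrow> g (a + b) = g a + g b"
    and scale: "\<And>a t. a \<in> X \<Longrightarrow> g (t *\<^sub>R a) = t * g a"
    and cont: "continuous_map T euclideanreal g"
  shows "(\<lambda>y. complex_of_real (g y) - \<i> * complex_of_real (g (seq_smult \<i> y))) \<in> cdual X T"
    (is "?f \<in> _")
  unfolding cdual_def mem_Collect_eq
proof (intro conjI ballI allI)
  fix a b assume "a \<in> X" "b \<in> X"
  moreover have "seq_smult \<i> (a + b) = seq_smult \<i> a + seq_smult \<i> b"
    by (simp add: seq_smult_def fun_eq_iff distrib_left)
  ultimately show "?f (seq_add a b) = ?f a + ?f b"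
    by (simp add: seq_add_eq_plus add seq_smult_carrier algebra_simps)
next
  fix c a assume a: "a \<in> X"
  have ia: "seq_smult \<i> a \<in> X"
    using a by (rule seq_smult_carrier)
  have "seq_smult c a = Re c *\<^sub>R a + Im c *\<^sub>R seq_smult \<i> a"
    by (subst complex_eq[of c]) (simp add: seq_smult_def fun_eq_iff scaleR_conv_of_real algebra_simps)
  then have re: "g (seq_smult c a) = Re c * g a + Im c * g (seq_smult \<i> a)"
    using a ia subspace_scale[OF subspace_carrier] by (simp add: add scale)
  have "seq_smult \<i> (seq_smult c a) = Re c *\<^sub>R seq_smult \<i> a + (- Im c) *\<^sub>R a"
    by (subst complex_eq[of c]) (simp add: seq_smult_def fun_eq_iff scaleR_conv_of_real algebra_simps)
  then have im: "g (seq_smult \<i> (seq_smult c a)) = Re c * g (seq_smult \<i> a) - Im c * g a"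
    using a ia subspace_scale[OF subspace_carrier] by (simp add: add scale del: scaleR_minus_left)
  show "?f (seq_smult c a) = c * ?f a"
    unfolding re im by (subst (3) complex_eq[of c]) (simp add: algebra_simps)
next
  have "continuous_map T T (seq_smult \<i>)"
    using continuous_map_seq_smult[of T "\<lambda>_. \<i>" "\<lambda>y. y"] by (simp add: continuous_map_id_subt)
  then have "continuous_map T euclideanreal (\<lambda>y. g (seq_smult \<i> y))"
    using continuous_map_compose[OF _ cont] by (simp add: o_def)
  then show "continuous_map T euclidean ?f"
    using cont by (simp add: continuous_map_atin tendsto_intros)
qed

lemma convex_zero_neighbourhood_avoiding:
  assumes M: "subspace M" and x: "x \<in> X" "x \<notin> T closure_of M"
  obtains W where "openin T W" "convex W" "0 \<in> W" "\<And>m. m \<in> M \<Longrightarrow> x + m \<notin> W"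
proof -
  obtain U where "openin T U" "x \<in> U" "U \<inter> M = {}"
    using x unfolding in_closure_of by auto
  then obtain V where V: "openin T V" "x \<in> V" "convex V" and VM: "V \<inter> M = {}"
    by (metis convex_open_neighbourhood disjoint_iff subsetD)
  define W where "W = {y \<in> topspace T. x + (- 1) *\<^sub>R y \<in> V}"
  show thesis
  proof
    have "continuous_map T T (\<lambda>y. x + (- 1) *\<^sub>R y)"
      using x(1) by (intro continuous_map_vector_add continuous_map_vector_scaleR) auto
    then show "openin T W"
      unfolding W_def using V(1) by (rule openin_continuous_map_preimage)
    show "convex W"
    proof (rule convexI)
      fix y z and u v :: real assume "y \<in> W" "z \<in> W" "0 \<le> u" "0 \<le> v" "u + v = 1"
      then have "u *\<^sub>R (x - y) + v *\<^sub>R (x - z) \<in> V" "u *\<^sub>R y + v *\<^sub>R z \<in> X"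
        using V(3) subspace_imp_convex[OF subspace_carrier]
        by (auto simp: W_def intro: convexD)
      moreover have "u *\<^sub>R (x - y) + v *\<^sub>R (x - z) = x - (u *\<^sub>R y + v *\<^sub>R z)"
        using \<open>u + v = 1\<close> by (simp add: algebra_simps flip: scaleR_add_left)
      ultimately show "u *\<^sub>R y + v *\<^sub>R z \<in> W"
        by (simp add: W_def)
    qed
    show "0 \<in> W"
      using V(2) subspace_0[OF subspace_carrier] by (simp add: W_def)
    show "x + m \<notin> W" if "m \<in> M" for m
      using VM subspace_neg[OF M that] by (auto simp: W_def)
  qed
qed

lemma continuous_map_if_dominated_by_minkowski_functional:
  assumes add: "\<And>a b. a \<in> X \<Longrightarrow> b \<in> X \<Longrightarrow> g (a + b) = g a + g b"
    and scale: "\<And>a t. a \<in> X \<Longrightarrow> g (t *\<^sub>R a) = t * g a"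
    and W: "openin T W" "0 \<in> W" and dom: "\<And>a. a \<in> X \<Longrightarrow> g a \<le> minkowski_functional W a"
  shows "continuous_map T euclideanreal g"
proof (rule continuous_map_if_bounded_near_zero[OF add scale])
  define U where "U = W \<inter> {z \<in> topspace T. (- 1) *\<^sub>R z \<in> W}"
  have "continuous_map T T (\<lambda>z. (- 1) *\<^sub>R z)"
    by (intro continuous_map_vector_scaleR) auto
  then show "openin T U"
    unfolding U_def using W(1) by (intro openin_Int openin_continuous_map_preimage)
  show "0 \<in> U"
    using W(2) subspace_0[OF subspace_carrier] by (simp add: U_def)
  show "\<bar>g z\<bar> \<le> 1" if "z \<in> U" for z
  proof -
    have z: "z \<in> X" "z \<in> W" "- z \<in> W"
      using that by (auto simp: U_def)
    have "g z \<le> 1" "g (- z) \<le> 1"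
      using dom[OF z(1)] dom[OF subspace_neg[OF subspace_carrier z(1)]]
        minkowski_functional_le[of 1 z W] minkowski_functional_le[of 1 "- z" W] z
      by auto
    moreover have "g (- z) = - g z"
      using scale[OF z(1), of "- 1"] by simp
    ultimately show ?thesis
      by linarith
  qed
qed

lemma real_separation:
  assumes M: "subspace M" "M \<subseteq> X" and x: "x \<in> X" "x \<notin> T closure_of M"
  obtains g where "\<And>a b. a \<in> X \<Longrightarrow> b \<in> X \<Longrightarrow> g (a + b) = g a + g b"
    and "\<And>a t. a \<in> X \<Longrightarrow> g (t *\<^sub>R a) = t * g a"
    and "continuous_map T euclideanreal g" and "\<And>m. m \<in> M \<Longrightarrow> g m = 0" and "g x = 1"
proof -
  obtain W where W: "openin T W" "convex W" "0 \<in> W" and avoid: "\<And>m. m \<in> M \<Longrightarrow> x + m \<notin> W"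
    using convex_zero_neighbourhood_avoiding[OF M(1) x] by blast
  have absorbing: "\<And>y. y \<in> X \<Longrightarrow> \<exists>t>0. inverse t *\<^sub>R y \<in> W"
    using open_zero_neighbourhood_absorbing[OF W(1,3)] .
  obtain g where add: "\<And>a b. a \<in> X \<Longrightarrow> b \<in> X \<Longrightarrow> g (a + b) = g a + g b"
    and scale: "\<And>a t. a \<in> X \<Longrightarrow> g (t *\<^sub>R a) = t * g a"
    and dom: "\<And>a. a \<in> X \<Longrightarrow> g a \<le> minkowski_functional W a"
    and graph: "\<And>a r. (a, r) \<in> {(m + t *\<^sub>R x, t) | m t. m \<in> M} \<Longrightarrow> g a = r"
    using hahn_banach[OF subspace_carrier sublinear_on_minkowski_functional[OF W(2,3) absorbing]
        dominated_graph_line_over_subspace[OF W(2,3) absorbing subspace_carrier M x(1) avoid]]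
    by blast
  show thesis
  proof (rule that[OF add scale])
    show "continuous_map T euclideanreal g"
      using continuous_map_if_dominated_by_minkowski_functional[OF add scale W(1,3) dom] .
    show "g m = 0" if "m \<in> M" for m
      using graph[of m 0] that by auto
    show "g x = 1"
      using graph[of x 1] subspace_0[OF M(1)] by force
  qed
qed

theorem cdual_separation:
  assumes M: "seq_subspace M" "M \<subseteq> X" and x: "x \<in> X" "x \<notin> T closure_of M"
  obtains f where "f \<in> cdual X T" "\<And>m. m \<in> M \<Longrightarrow> f m = 0" "f x \<noteq> 0"
proof -
  obtain g where add: "\<And>a b. a \<in> X \<Longrightarrow> b \<in> X \<Longrightarrow> g (a + b) = g a + g b"
    and scale: "\<And>a t. a \<in> X \<Longrightarrow> g (t *\<^sub>R a) = t * g a"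
    and cont: "continuous_map T euclideanreal g" and zero: "\<And>m. m \<in> M \<Longrightarrow> g m = 0"
    and one: "g x = 1"
    using real_separation[OF seq_subspace_imp_subspace[OF M(1)] M(2) x] by blast
  have "seq_smult \<i> m \<in> M" if "m \<in> M" for m
    using M(1) that by (simp add: seq_subspace_def)
  then show thesis
    using that[OF complexification_in_cdual[OF add scale cont]] zero one
    by (simp add: complex_eq_iff)
qed

lemma phi_subset_DS:
  assumes phi: "phi \<subseteq> X" and pq: "\<And>n. p n < q n" and q: "filterlim q at_top sequentially"
  shows "phi \<subseteq> DS p q X T"
proof
  fix x assume x: "x \<in> phi"
  then obtain N where N: "{j. x j \<noteq> 0} \<subseteq> {..<N}"
    unfolding phi_def using finite_nat_bounded by blast
  define e where "e j = (\<lambda>i. if i = j then x j else 0)" for j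
  have "e j \<in> phi" for j
    unfolding phi_def e_def mem_Collect_eq by (rule finite_subset[of _ "{j}"]) auto
  then have "limitin T (\<lambda>n. \<Sum>j<N. Tn_weight p q n j *\<^sub>R e j) (\<Sum>j<N. 1 *\<^sub>R e j) sequentially"
    using phi by (intro limitin_sum_scaleR Tn_weight_tendsto_one[OF pq q]) auto
  moreover have combination: "(\<Sum>j<N. c j *\<^sub>R e j) = (\<lambda>i. c i *\<^sub>R x i)" for c
    using N by (auto simp: fun_eq_iff sum_fun_apply e_def if_distrib[of "\<lambda>z. _ *\<^sub>R z"] cong: if_cong)
  have "(\<lambda>n. \<Sum>j<N. Tn_weight p q n j *\<^sub>R e j) = (\<lambda>n. Tn p q n x)"
    by (simp add: combination fun_eq_iff Tn_apply)
  moreover have "(\<Sum>j<N. 1 *\<^sub>R e j) = x"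
    using combination[of "\<lambda>_. 1"] by simp
  ultimately have "limitin T (\<lambda>n. Tn p q n x) x sequentially"
    by (simp only:)
  then show "x \<in> DS p q X T"
    using x phi by (auto simp: DS_def)
qed

lemma DS_subset_DW: "DS p q X T \<subseteq> DW p q X T"
  unfolding DS_def DW_def cdual_def
  by (auto dest: continuous_map_limit simp: o_def)

lemma DW_subset_closure_phi:
  assumes "phi \<subseteq> X"
  shows "DW p q X T \<subseteq> T closure_of phi"
proof
  fix x assume x: "x \<in> DW p q X T"
  show "x \<in> T closure_of phi"
  proof (rule ccontr)
    assume "x \<notin> T closure_of phi"
    then obtain f where f: "f \<in> cdual X T" "\<And>m. m \<in> phi \<Longrightarrow> f m = 0" "f x \<noteq> 0"
      using cdual_separation[OF seq_subspace_phi assms] x by (auto simp: DW_def)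
    have "(\<lambda>n. f (Tn p q n x)) \<longlonglongrightarrow> f x"
      using x f(1) by (simp add: DW_def)
    then have "f x = 0"
      by (simp add: f(2) Tn_in_phi LIMSEQ_const_iff)
    with f(3) show False ..
  qed
qed

end

theorem mainTheorem6:
  fixes X :: "seq set" and T :: "seq topology" and p q :: "nat \<Rightarrow> nat"
  assumes "FK_space X T"
    and "phi \<subseteq> X"
    and "\<And>n. p n < q n"
    and "filterlim q at_top sequentially"
  shows "phi \<subseteq> DS p q X T \<and> DS p q X T \<subseteq> DW p q X T \<and> DW p q X T \<subseteq> DF p q X T
         \<and> DF p q X T \<subseteq> DB p q X T \<and> DB p q X T \<subseteq> X
         \<and> DW p q X T \<subseteq> T closure_of phi"
proof -
  interpret fk_space X T
    by (rule fk_space.intro) (fact assms(1))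
  have "DW p q X T \<subseteq> DF p q X T"
    by (auto simp: DW_def DF_def DFplus_def convergent_def)
  moreover have "DF p q X T \<subseteq> DB p q X T"
    by (auto simp: DF_def DB_def DFplus_def DBplus_def convergent_def intro: convergent_imp_bounded)
  moreover have "DB p q X T \<subseteq> X"
    by (auto simp: DB_def)
  ultimately show ?thesis
    using phi_subset_DS[OF assms(2-4)] DS_subset_DW DW_subset_closure_phi[OF assms(2)] by blast
qed

end
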